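(* For any constant $\epsilon\in(0,1)$, any $\alpha\in(0,1)$ and any $\rho\ge1$, IPR is a $(1+\epsilon)(1+\alpha)$-consistent partitioning algorithm.
   Context: Scheduling with Speed Predictions (SSP). An instance consists of $n$ jobs with processing times $p_1,\dots,p_n\ge0$ and $m$ machines with true speeds $s_1,\dots,s_m>0$; job $j$ on machine $i$ takes time $p_j/s_i$. For a bag $B$, $p(B)=\sum_{j\in B}p_j$. In the partitioning stage the algorithm receives $\mathbf p$ and predicted speeds $\hat{\mathbf s}\ge0$ (not $\mathbf s$) and partitions $[n]$ into $m$ possibly empty bags. In the scheduling stage $\mathbf s$ is revealed and each bag is assigned whole to a machine; the makespan is $\max_i(\text{total processing time on } i)/s_i$. $opt(\mathbf p,\mathbf s)$ is the minimum makespan of assigning individual jobs knowing $\mathbf s$. A partitioning algorithm is $c$-consistent if the two-stage algorithm that runs it and then assigns the bags to the machines with minimum possible makespan has makespan at most $c\cdot opt(\mathbf p,\mathbf s)$ whenever $\hat{\mathbf s}=\mathbf s$. Algorithm IPR. Input: predicted speeds $\hat s_1\ge\dots\ge\hat s_m$, $\mathbf p$, $\alpha$, accuracy $\epsilon\in(0,1)$, $\rho\ge1$. (1) Compute a partition $B_1,\dots,B_m$ with $p(B_1)\ge\dots\ge p(B_m)$ such that putting $B_i$ on machine $i$ has makespan at most $(1+\epsilon)opt(\mathbf p,\hat{\mathbf s})$ under speeds $\hat{\mathbf s}$. (2) Set $\overline{OPT}_C=\max_i p(B_i)/\hat s_i$ and $\mathcal M_i=\{B_i\}$. (3) While $\max\{p(B):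 B\in\cup_i\mathcal M_i, |B|\ge2\}>\rho\min\{p(B):B\in\cup_i\mathcal M_i\}$: compute $\mathcal M'=$ LPT-Rebalance$(\mathcal M)$; if $\max_i\sum_{B\in\mathcal M'_i}p(B)/\hat s_i>(1+\alpha)\overline{OPT}_C$ return the current bags $\cup_i\mathcal M_i$; else $\mathcal M\leftarrow\mathcal M'$. (4) Return the bags $\cup_i\mathcal M_i$. LPT-Rebalance: let $B_{\min}$ be a bag of minimum $p(B)$ over all bags, $\mathcal M_{\min}$ its collection, $\mathcal M_{\max}$ a collection containing a bag of maximum $p(B)$ among bags with at least two jobs. Move $B_{\min}$ into $\mathcal M_{\max}$, let $\ell=|\mathcal M_{\max}|$, pool its jobs and redistribute them into $\ell$ new bags by LPT (jobs in non-increasing processing time, each into a currently least-loaded bag); these form the new $\mathcal M_{\max}$. *)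

theory Defs
  imports Complex_Main "HOL-Library.FuncSet"
begin

(* Jobs are 0..<n with processing times p :: nat => real; machines are 0..<m
   with speeds s :: nat => real.  A bag is a set of jobs. *)

definition bagp :: "(nat \<Rightarrow> real) \<Rightarrow> nat set \<Rightarrow> real" where
  "bagp p B = (\<Sum>j\<in>B. p j)"

definition mk :: "nat \<Rightarrow> (nat \<Rightarrow> real) \<Rightarrow> (nat \<Rightarrow> real) \<Rightarrow> real" where
  "mk m load s = Max ((\<lambda>i. load i / s i) ` {..<m})"

definition opt :: "nat \<Rightarrow> nat \<Rightarrow> (nat \<Rightarrow> real) \<Rightarrow> (nat \<Rightarrow> real) \<Rightarrow> real" where
  "opt n m p s = Min ((\<lambda>f. mk m (\<lambda>i. \<Sum>j\<in>{j. j < n \<and> f j = i}. p j) s)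
                      ` ({..<n} \<rightarrow>\<^sub>E {..<m}))"

definition bag_opt :: "nat \<Rightarrow> (nat \<Rightarrow> real) \<Rightarrow> (nat \<Rightarrow> real) \<Rightarrow> nat set list \<Rightarrow> real" where
  "bag_opt m p s bs = Min ((\<lambda>f. mk m (\<lambda>i. \<Sum>k\<in>{k. k < length bs \<and> f k = i}. bagp p (bs ! k)) s)
                      ` ({..<length bs} \<rightarrow>\<^sub>E {..<m}))"

definition is_partition :: "nat \<Rightarrow> nat \<Rightarrow> (nat \<Rightarrow> nat set) \<Rightarrow> bool" where
  "is_partition n m B \<longleftrightarrow> (\<Union>i<m. B i) = {..<n} \<and>
     (\<forall>i<m. \<forall>i'<m. i \<noteq> i' \<longrightarrow> B i \<inter> B i' = {})"

(* LPT: process the job list in the given order, each job into a currently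
   least-loaded bag (ties broken arbitrarily) *)
inductive lpt_run :: "(nat \<Rightarrow> real) \<Rightarrow> nat list \<Rightarrow> nat set list \<Rightarrow> nat set list \<Rightarrow> bool"
  for p where
  lpt_nil: "lpt_run p [] Bs Bs"
| lpt_cons: "\<lbrakk> k < length Bs; \<forall>k'<length Bs. bagp p (Bs ! k) \<le> bagp p (Bs ! k');
              lpt_run p js (Bs[k := insert j (Bs ! k)]) R \<rbrakk> \<Longrightarrow> lpt_run p (j # js) Bs R"

definition lpt :: "(nat \<Rightarrow> real) \<Rightarrow> nat set \<Rightarrow> nat \<Rightarrow> nat set list \<Rightarrow> bool" where
  "lpt p J l R \<longleftrightarrow> (\<exists>js. distinct js \<and> set js = J \<and> sorted_wrt (\<lambda>a b. p b \<le> p a) js \<and>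
                        lpt_run p js (replicate l {}) R)"

definition all_bags :: "nat \<Rightarrow> (nat \<Rightarrow> nat set list) \<Rightarrow> nat set list" where
  "all_bags m M = concat (map M [0..<m])"

(* M' is a possible result of LPT-Rebalance(M) *)
definition rebal :: "nat \<Rightarrow> (nat \<Rightarrow> real) \<Rightarrow> (nat \<Rightarrow> nat set list) \<Rightarrow> (nat \<Rightarrow> nat set list) \<Rightarrow> bool" where
  "rebal m p M M' \<longleftrightarrow> (\<exists>imin kmin imax kmax Bs'.
     imin < m \<and> kmin < length (M imin) \<and>
     (\<forall>i<m. \<forall>k<length (M i). bagp p (M imin ! kmin) \<le> bagp p (M i ! k)) \<and>
     imax < m \<and> kmax < length (M imax) \<and> 2 \<le> card (M imax ! kmax) \<and>
     (\<forall>i<m. \<forall>k<length (M i). 2 \<le> card (M i ! k) \<longrightarrow> bagp p (M i ! k) \<le> bagp p (M imax ! kmax)) \<and>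
     (let bmin = M imin ! kmin;
          newmax = (if imin = imax then M imax else M imax @ [bmin]);
          newmin = take kmin (M imin) @ drop (Suc kmin) (M imin)
      in lpt p (\<Union>(set newmax)) (length newmax) Bs' \<and>
         M' = (if imin = imax then M(imax := Bs') else M(imin := newmin, imax := Bs'))))"

definition loop_cond :: "nat \<Rightarrow> (nat \<Rightarrow> real) \<Rightarrow> real \<Rightarrow> (nat \<Rightarrow> nat set list) \<Rightarrow> bool" where
  "loop_cond m p \<rho> M \<longleftrightarrow> (let A = set (all_bags m M) in
     (\<exists>B\<in>A. 2 \<le> card B) \<and>
     Max (bagp p ` {B\<in>A. 2 \<le> card B}) > \<rho> * Min (bagp p ` A))"

definition coll_makespan :: "nat \<Rightarrow> (nat \<Rightarrow> real) \<Rightarrow> (nat \<Rightarrow> real) \<Rightarrow> (nat \<Rightarrow> nat set list) \<Rightarrow> real" where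
  "coll_makespan m p sh M = mk m (\<lambda>i. sum_list (map (bagp p) (M i))) sh"

(* step (3) of IPR: possible outputs of the while loop from state M,
   speeds sh (already sorted), threshold OPT_C = optc *)
inductive ipr_loop :: "nat \<Rightarrow> (nat \<Rightarrow> real) \<Rightarrow> (nat \<Rightarrow> real) \<Rightarrow> real \<Rightarrow> real \<Rightarrow> real \<Rightarrow>
    (nat \<Rightarrow> nat set list) \<Rightarrow> nat set list \<Rightarrow> bool"
  for m p sh \<alpha> optc \<rho> where
  loop_stop: "\<not> loop_cond m p \<rho> M \<Longrightarrow> ipr_loop m p sh \<alpha> optc \<rho> M (all_bags m M)"
| loop_reject: "\<lbrakk> loop_cond m p \<rho> M; rebal m p M M'; coll_makespan m p sh M' > (1 + \<alpha>) * optc \<rbrakk>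
     \<Longrightarrow> ipr_loop m p sh \<alpha> optc \<rho> M (all_bags m M)"
| loop_accept: "\<lbrakk> loop_cond m p \<rho> M; rebal m p M M'; \<not> coll_makespan m p sh M' > (1 + \<alpha>) * optc;
     ipr_loop m p sh \<alpha> optc \<rho> M' out \<rbrakk> \<Longrightarrow> ipr_loop m p sh \<alpha> optc \<rho> M out"

(* bs is a possible output of IPR on predicted speeds sh.  Machines are first
   relabelled by a bijection sigma so that the predicted speeds are
   non-increasing (s_1 >= ... >= s_m). *)
definition ipr_out :: "nat \<Rightarrow> nat \<Rightarrow> (nat \<Rightarrow> real) \<Rightarrow> (nat \<Rightarrow> real) \<Rightarrow> real \<Rightarrow> real \<Rightarrow> real \<Rightarrow>
    nat set list \<Rightarrow> bool" where
  "ipr_out n m p sh \<alpha> \<epsilon> \<rho> bs \<longleftrightarrow> (\<exists>\<sigma> B.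
     bij_betw \<sigma> {..<m} {..<m} \<and>
     (\<forall>i<m. \<forall>i'<m. i \<le> i' \<longrightarrow> sh (\<sigma> i') \<le> sh (\<sigma> i)) \<and>
     is_partition n m B \<and>
     (\<forall>i<m. \<forall>i'<m. i \<le> i' \<longrightarrow> bagp p (B i') \<le> bagp p (B i)) \<and>
     mk m (\<lambda>i. bagp p (B i)) (sh \<circ> \<sigma>) \<le> (1 + \<epsilon>) * opt n m p sh \<and>
     ipr_loop m p (sh \<circ> \<sigma>) \<alpha> (mk m (\<lambda>i. bagp p (B i)) (sh \<circ> \<sigma>)) \<rho>
        (\<lambda>i. if i < m then [B i] else []) bs)"

definition ipr_consistent :: "real \<Rightarrow> real \<Rightarrow> real \<Rightarrow> real \<Rightarrow> bool" where
  "ipr_consistent \<alpha> \<epsilon> \<rho> c \<longleftrightarrow> (\<forall>n m p s bs.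
     0 < m \<and> (\<forall>j<n. 0 \<le> p j) \<and> (\<forall>i<m. 0 < s i) \<and> ipr_out n m p s \<alpha> \<epsilon> \<rho> bs
     \<longrightarrow> bag_opt m p s bs \<le> c * opt n m p s)"

end

theory Submission
  imports Defs
begin

text \<open>Every bag collection the loop accepts has makespan at most \<open>(1 + \<alpha>) OPT_C\<close> under the
  predicted speeds, and so does the initial one, whose makespan is \<open>OPT_C \<le> (1 + \<epsilon>) opt\<close>.
  The output is the set of bags of such a collection, and when the predictions are correct,
  putting all bags of the \<open>i\<close>-th collection on the \<open>i\<close>-th fastest machine is one
  admissible assignment of the bags.\<close>

lemma concat_source_index:
  fixes w :: "'a \<Rightarrow> 'b::comm_monoid_add"
  shows "\<exists>f. (\<forall>k<length (concat xss). f k < length xss) \<and>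
    (\<forall>j<length xss. (\<Sum>k | k < length (concat xss) \<and> f k = j. w (concat xss ! k)) =
                     sum_list (map w (xss ! j)))"
proof (induction xss)
  case Nil
  then show ?case by simp
next
  case (Cons xs xss)
  then obtain f where f_lt: "\<forall>k<length (concat xss). f k < length xss"
    and f_sum: "\<forall>j<length xss. (\<Sum>k | k < length (concat xss) \<and> f k = j. w (concat xss ! k)) =
                                sum_list (map w (xss ! j))"
    by blast
  define g where "g k = (if k < length xs then 0 else Suc (f (k - length xs)))" for k
  have "(\<Sum>k | k < length (concat (xs # xss)) \<and> g k = j. w (concat (xs # xss) ! k)) =
        sum_list (map w ((xs # xss) ! j))" if "j < length (xs # xss)" for j
  proof (cases j)
    case 0
    then have "{k. k < length (concat (xs # xss)) \<and> g k = j} = {..<length xs}"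
      by (auto simp: g_def)
    then show ?thesis
      using 0 by (simp add: nth_append sum_list_sum_nth atLeast0LessThan)
  next
    case (Suc j')
    then have "{k. k < length (concat (xs # xss)) \<and> g k = j} =
        (\<lambda>k. k + length xs) ` {k. k < length (concat xss) \<and> f k = j'}"
      by (auto simp: g_def intro!: rev_image_eqI[of "_ - length xs"])
    then show ?thesis
      using Suc that f_sum by (simp add: sum.reindex nth_append)
  qed
  moreover have "\<forall>k<length (concat (xs # xss)). g k < length (xs # xss)"
    using f_lt by (simp add: g_def)
  ultimately show ?case by blast
qed

lemma mk_cong:
  assumes "\<And>i. i < m \<Longrightarrow> load i = load' i"
  shows "mk m load s = mk m load' s"
  unfolding mk_def using assms by (metis (no_types, lifting) image_cong lessThan_iff)

lemma mk_bij_reindex: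
  assumes "bij_betw \<sigma> {..<m} {..<m}"
  shows "mk m (load \<circ> \<sigma>) (s \<circ> \<sigma>) = mk m load s"
proof -
  have "(\<lambda>i. load i / s i) ` {..<m} = (\<lambda>i. load i / s i) ` \<sigma> ` {..<m}"
    using assms by (simp add: bij_betw_imp_surj_on)
  then show ?thesis
    unfolding mk_def image_image by simp
qed

lemma mk_nonneg:
  assumes "0 < m" and "\<And>i. i < m \<Longrightarrow> 0 \<le> load i" and "\<And>i. i < m \<Longrightarrow> 0 < s i"
  shows "0 \<le> mk m load s"
proof -
  have "0 \<le> load 0 / s 0"
    using assms by (simp add: divide_nonneg_pos)
  also have "\<dots> \<le> mk m load s"
    unfolding mk_def using assms(1) by (intro Max_ge) auto
  finally show ?thesis .
qed

lemma bagp_partition_nonneg: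
  assumes "is_partition n m B" and "\<forall>j<n. 0 \<le> p j" and "i < m"
  shows "0 \<le> bagp p (B i)"
  unfolding bagp_def using assms by (intro sum_nonneg) (auto simp: is_partition_def)

lemma bag_opt_le_assignment:
  assumes "F \<in> {..<length bs} \<rightarrow>\<^sub>E {..<m}"
  shows "bag_opt m p s bs \<le> mk m (\<lambda>i. \<Sum>k | k < length bs \<and> F k = i. bagp p (bs ! k)) s"
  unfolding bag_opt_def using assms by (intro Min_le finite_imageI finite_PiE imageI) auto

lemma bag_opt_all_bags_le:
  assumes \<sigma>: "bij_betw \<sigma> {..<m} {..<m}"
  shows "bag_opt m p s (all_bags m M) \<le> coll_makespan m p (s \<circ> \<sigma>) M"
proof -
  define bs where "bs = all_bags m M"
  obtain f where f_lt: "\<forall>k<length bs. f k < m"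
    and f_sum: "\<forall>j<m. (\<Sum>k | k < length bs \<and> f k = j. bagp p (bs ! k)) =
                       sum_list (map (bagp p) (M j))"
    using concat_source_index[of "map M [0..<m]" "bagp p"] unfolding bs_def all_bags_def by auto
  define F where "F = restrict (\<sigma> \<circ> f) {..<length bs}"
  define load where "load i = (\<Sum>k | k < length bs \<and> F k = i. bagp p (bs ! k))" for i
  have F_maps: "F \<in> {..<length bs} \<rightarrow>\<^sub>E {..<m}"
    using f_lt bij_betw_apply[OF \<sigma>] by (auto simp: F_def)
  have "load (\<sigma> j) = sum_list (map (bagp p) (M j))" if "j < m" for j
  proof -
    have "{k. k < length bs \<and> F k = \<sigma> j} = {k. k < length bs \<and> f k = j}"
      using that f_lt bij_betw_imp_inj_on[OF \<sigma>] by (auto simp: F_def inj_on_eq_iff)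
    then show ?thesis
      using that f_sum by (simp add: load_def)
  qed
  then have "mk m (load \<circ> \<sigma>) (s \<circ> \<sigma>) = coll_makespan m p (s \<circ> \<sigma>) M"
    unfolding coll_makespan_def by (intro mk_cong) simp
  moreover have "bag_opt m p s bs \<le> mk m load s"
    unfolding load_def using F_maps by (rule bag_opt_le_assignment)
  ultimately show ?thesis
    using mk_bij_reindex[OF \<sigma>] unfolding bs_def by simp
qed

lemma ipr_loop_makespan_bound:
  assumes "ipr_loop m p sh \<alpha> optc \<rho> M out"
    and "coll_makespan m p sh M \<le> (1 + \<alpha>) * optc"
  shows "\<exists>M'. out = all_bags m M' \<and> coll_makespan m p sh M' \<le> (1 + \<alpha>) * optc"
  using assms by (induction rule: ipr_loop.induct) auto

theorem lemma1:
  fixes \<epsilon> \<alpha> \<rho> :: real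
  assumes "0 < \<epsilon>" "\<epsilon> < 1" "0 < \<alpha>" "\<alpha> < 1" "1 \<le> \<rho>"
  shows "ipr_consistent \<alpha> \<epsilon> \<rho> ((1 + \<epsilon>) * (1 + \<alpha>))"
  unfolding ipr_consistent_def
proof (intro allI impI, elim conjE)
  fix n m p s bs
  assume m: "0 < m" and p: "\<forall>j<n. 0 \<le> p j" and s: "\<forall>i<m. 0 < s i"
    and "ipr_out n m p s \<alpha> \<epsilon> \<rho> bs"
  then obtain \<sigma> B where \<sigma>: "bij_betw \<sigma> {..<m} {..<m}" and B: "is_partition n m B"
    and optc_le: "mk m (\<lambda>i. bagp p (B i)) (s \<circ> \<sigma>) \<le> (1 + \<epsilon>) * opt n m p s"
    and loop: "ipr_loop m p (s \<circ> \<sigma>) \<alpha> (mk m (\<lambda>i. bagp p (B i)) (s \<circ> \<sigma>)) \<rho>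
                 (\<lambda>i. if i < m then [B i] else []) bs"
    unfolding ipr_out_def by blast
  define optc where "optc = mk m (\<lambda>i. bagp p (B i)) (s \<circ> \<sigma>)"
  have speeds: "0 < (s \<circ> \<sigma>) i" if "i < m" for i
    using s bij_betw_apply[OF \<sigma>] that by auto
  have "0 \<le> optc"
    unfolding optc_def using m bagp_partition_nonneg[OF B p] speeds by (rule mk_nonneg)
  then have "optc \<le> (1 + \<alpha>) * optc"
    using mult_nonneg_nonneg[of \<alpha> optc] assms by (simp add: algebra_simps)
  moreover have "coll_makespan m p (s \<circ> \<sigma>) (\<lambda>i. if i < m then [B i] else []) = optc"
    unfolding coll_makespan_def optc_def by (rule mk_cong) simp
  ultimately obtain M where bs: "bs = all_bags m M"
    and M: "coll_makespan m p (s \<circ> \<sigma>) M \<le> (1 + \<alpha>) * optc"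
    using ipr_loop_makespan_bound[OF loop[folded optc_def]] by auto
  have "bag_opt m p s bs \<le> (1 + \<alpha>) * optc"
    using bag_opt_all_bags_le[OF \<sigma>] M unfolding bs by (rule order_trans)
  also have "\<dots> \<le> (1 + \<alpha>) * ((1 + \<epsilon>) * opt n m p s)"
    using optc_le assms unfolding optc_def by (intro mult_left_mono) auto
  finally show "bag_opt m p s bs \<le> (1 + \<epsilon>) * (1 + \<alpha>) * opt n m p s"
    by (simp add: algebra_simps)
qed

end
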